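(* Consider the ship dynamics $$M\dot\nu(t) + D(\nu(t))\nu(t) + C(\nu(t))\nu(t) = \tau(t) + \tau_d(t), \qquad \nu=[u,v,r]^\top\in\mathbb{R}^3,$$ with $M$, $D$, $C$, $\kappa_{ij}$, $\sigma$, $\Gamma_1,\Gamma_2,\Gamma_3$ and $T$ as described in the context, and assume $\kappa_{23}\kappa_{32}<\kappa_{22}\kappa_{33}$ (so $\sigma>0$) and $\Gamma_1,\Gamma_2,\Gamma_3>0$. Run the disturbance observer $$\hat\tau_d(t) = \zeta(t) + T\nu(t),\qquad \dot\zeta(t) = -T M^{-1}\big(\tau(t) + \hat\tau_d(t) - D(\nu(t))\nu(t) - C(\nu(t))\nu(t)\big),$$ from an arbitrary initial value $\zeta(0)\in\mathbb{R}^3$, along a solution $(\nu,\zeta)$ defined for $t\ge 0$. If the disturbance $\tau_d$ is constant, then the estimation error $z(t)=\tau_d-\hat\tau_d(t)$ satisfies $$\dot z(t) = -\sigma\,\mathrm{diag}(\Gamma_1,\Gamma_2,\Gamma_3)\, z(t),$$ i.e. $z_i(t)=e^{-\sigma\Gamma_i t}z_i(0)$ for $i=1,2,3$; in particular the error dynamics are globally exponentially stable and $z(t)\to 0$ exponentially, with all three components converging at the common rate $\sigma\Gamma$ when $\Gamma_1=\Gamma_2=\Gamma_3=\Gamma$.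
   Context: $\nu=[u,v,r]^\top$ are the surge, sway and yaw-rate velocities of the ship, $\tau(t)\in\mathbb{R}^3$ is the control input and $\tau_d(t)\in\mathbb{R}^3$ the environmental disturbance (wind, waves, currents). The mass matrix is constant, symmetric, positive definite, of the form $M=\begin{bmatrix} m_{11}&0&0\\0&m_{22}&m_{23}\\0&m_{32}&m_{33}\end{bmatrix}$ with positive entries, and its inverse is written $M^{-1}=\begin{bmatrix} \kappa_{11}&0&0\\0&\kappa_{22}&\kappa_{23}\\0&\kappa_{32}&\kappa_{33}\end{bmatrix}$. $D(\nu)$ is the nonlinear damping matrix $\begin{bmatrix} d_{11}&0&0\\0&d_{22}&d_{23}\\0&d_{32}&d_{33}\end{bmatrix}$ with $d_{11}=-X_u-X_{|u|u}-X_{uuu}u^2$, $d_{22}=-Y_v-Y_{|v|v}-Y_{|r|v}|r|-Y_{vvv}v^2$, $d_{23}=-Y_r-Y_{|v|r}|v|-Y_{|r|r}|r|$, $d_{32}=-N_v-N_{|v|v}|v|-N_{|r|v}|r|$, $d_{33}=-N_r-N_{|v|r}|v|-N_{|r|r}|r|-N_{rrr}r^2$ (real hydrodynamic constants), and $C(\nu)=\begin{bmatrix}0&0&c_{13}\\0&0&c_{23}\\-c_{13}&-c_{23}&0\end{bmatrix}$ with $c_{13}=-m_{22}v-m_{23}r$, $c_{23}=m_{11}u$. Define $\sigma = 1-\frac{\kappa_{23}\kappa_{32}}{\kappa_{22}\kappa_{33}}$, adaptive gains $\Gamma_1,\Gamma_2,\Gamma_3\in\mathbb{R}$, and $$T=\begin{bmatrix}\Gamma_1\frac{\sigma}{\kappa_{11}}&0&0\\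 0&\frac{\Gamma_2}{\kappa_{22}}&-\Gamma_2\frac{\kappa_{23}}{\kappa_{22}\kappa_{33}}\\ 0&-\Gamma_3\frac{\kappa_{32}}{\kappa_{22}\kappa_{33}}&\frac{\Gamma_3}{\kappa_{33}}\end{bmatrix}.$$ *)

theory Defs
  imports "HOL-Analysis.Analysis"
begin

definition mat3 :: "real \<Rightarrow> real \<Rightarrow> real \<Rightarrow> real \<Rightarrow> real \<Rightarrow> real \<Rightarrow> real \<Rightarrow> real \<Rightarrow> real
    \<Rightarrow> real^3^3" where
  "mat3 a11 a12 a13 a21 a22 a23 a31 a32 a33 =
     (\<chi> i j. if i = 1 then (if j = 1 then a11 else if j = 2 then a12 else a13)
             else if i = 2 then (if j = 1 then a21 else if j = 2 then a22 else a23)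
             else (if j = 1 then a31 else if j = 2 then a32 else a33))"

definition massM :: "real \<Rightarrow> real \<Rightarrow> real \<Rightarrow> real \<Rightarrow> real \<Rightarrow> real^3^3" where
  "massM m11 m22 m23 m32 m33 = mat3 m11 0 0  0 m22 m23  0 m32 m33"

definition kap :: "real^3^3 \<Rightarrow> 3 \<Rightarrow> 3 \<Rightarrow> real" where
  "kap M i j = matrix_inv M $ i $ j"

record hydro =
  X_u :: real  X_absu_u :: real  X_uuu :: real
  Y_v :: real  Y_absv_v :: real  Y_absr_v :: real  Y_vvv :: real
  Y_r :: real  Y_absv_r :: real  Y_absr_r :: real
  N_v :: real  N_absv_v :: real  N_absr_v :: real
  N_r :: real  N_absv_r :: real  N_absr_r :: real  N_rrr :: real

definition dampD :: "hydro \<Rightarrow> real^3 \<Rightarrow> real^3^3" where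
  "dampD h nu = (let u = nu $ 1; v = nu $ 2; r = nu $ 3 in
     mat3 (- X_u h - X_absu_u h - X_uuu h * u\<^sup>2) 0 0
          0 (- Y_v h - Y_absv_v h - Y_absr_v h * \<bar>r\<bar> - Y_vvv h * v\<^sup>2)
            (- Y_r h - Y_absv_r h * \<bar>v\<bar> - Y_absr_r h * \<bar>r\<bar>)
          0 (- N_v h - N_absv_v h * \<bar>v\<bar> - N_absr_v h * \<bar>r\<bar>)
            (- N_r h - N_absv_r h * \<bar>v\<bar> - N_absr_r h * \<bar>r\<bar> - N_rrr h * r\<^sup>2))"

definition corC :: "real \<Rightarrow> real \<Rightarrow> real \<Rightarrow> real^3 \<Rightarrow> real^3^3" where
  "corC m11 m22 m23 nu = (let u = nu $ 1; v = nu $ 2; r = nu $ 3;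
       c13 = - m22 * v - m23 * r; c23 = m11 * u in
     mat3 0 0 c13  0 0 c23  (- c13) (- c23) 0)"

definition sigmaK :: "real^3^3 \<Rightarrow> real" where
  "sigmaK M = 1 - kap M 2 3 * kap M 3 2 / (kap M 2 2 * kap M 3 3)"

definition gainT :: "real^3^3 \<Rightarrow> real \<Rightarrow> real \<Rightarrow> real \<Rightarrow> real^3^3" where
  "gainT M g1 g2 g3 =
     mat3 (g1 * sigmaK M / kap M 1 1) 0 0
          0 (g2 / kap M 2 2) (- g2 * kap M 2 3 / (kap M 2 2 * kap M 3 3))
          0 (- g3 * kap M 3 2 / (kap M 2 2 * kap M 3 3)) (g3 / kap M 3 3)"

definition diag3 :: "real \<Rightarrow> real \<Rightarrow> real \<Rightarrow> real^3^3" where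
  "diag3 a b c = mat3 a 0 0  0 b 0  0 0 c"

definition gam :: "real \<Rightarrow> real \<Rightarrow> real \<Rightarrow> 3 \<Rightarrow> real" where
  "gam g1 g2 g3 i = (if i = 1 then g1 else if i = 2 then g2 else g3)"

end

theory Submission
  imports Defs "HOL-Real_Asymp.Real_Asymp"
begin

text \<open>Differentiating \<open>z = \<tau>d - \<zeta> - T \<nu>\<close> and substituting \<open>\<nu>' = M\<^sup>-\<^sup>1 (\<tau> - D \<nu> - C \<nu> + \<tau>d)\<close>
  from the ship model, all terms except \<open>\<tau>d - \<tau>hat\<close> cancel, so \<open>z' = - T M\<^sup>-\<^sup>1 z\<close>. For the mass
  matrix at hand \<open>M\<^sup>-\<^sup>1\<close> is explicit, and \<open>T\<close> is chosen precisely so that \<open>T M\<^sup>-\<^sup>1 = \<sigma> diag(\<Gamma>\<^sub>1,\<Gamma>\<^sub>2,\<Gamma>\<^sub>3)\<close>.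
  The error system thus decouples into three scalar equations \<open>z\<^sub>i' = - \<sigma> \<Gamma>\<^sub>i z\<^sub>i\<close>, solved by
  exponentials, which decay because \<open>\<sigma> > 0\<close> and \<open>\<Gamma>\<^sub>i > 0\<close>.\<close>

lemma observer_error_has_vector_derivative:
  fixes M K T :: "real^'n^'n" and \<nu> \<zeta> :: "real \<Rightarrow> real^'n"
  assumes left_inverse: "K ** M = mat 1"
    and nu_deriv: "(\<nu> has_vector_derivative \<nu>') (at t within S)"
    and plant: "M *v \<nu>' = f + \<tau>d"
    and zeta_deriv: "(\<zeta> has_vector_derivative - (T *v (K *v (f + (\<zeta> t + T *v \<nu> t))))) (at t within S)"
  shows "((\<lambda>s. \<tau>d - (\<zeta> s + T *v \<nu> s)) has_vector_derivative
            - ((T ** K) *v (\<tau>d - (\<zeta> t + T *v \<nu> t)))) (at t within S)"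
proof -
  have nu': "\<nu>' = K *v (f + \<tau>d)"
    by (metis plant left_inverse matrix_vector_mul_assoc matrix_vector_mul_lid)
  have "((\<lambda>s. \<tau>d - (\<zeta> s + T *v \<nu> s)) has_vector_derivative
          0 - (- (T *v (K *v (f + (\<zeta> t + T *v \<nu> t)))) + T *v \<nu>')) (at t within S)"
    by (intro has_vector_derivative_diff has_vector_derivative_const has_vector_derivative_add
        zeta_deriv bounded_linear.has_vector_derivative[OF matrix_vector_mul_bounded_linear nu_deriv])
  moreover have "0 - (- (T *v (K *v (f + (\<zeta> t + T *v \<nu> t)))) + T *v \<nu>')
      = - ((T ** K) *v (\<tau>d - (\<zeta> t + T *v \<nu> t)))"
    by (simp add: nu' matrix_vector_mul_assoc[symmetric] matrix_vector_mult_diff_distrib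
        matrix_vector_right_distrib algebra_simps)
  ultimately show ?thesis by simp
qed

lemma linear_ode_solution_exp:
  fixes f :: "real \<Rightarrow> real"
  assumes f_deriv: "\<And>s. s \<ge> 0 \<Longrightarrow> (f has_real_derivative - c * f s) (at s within {0..})"
    and "t \<ge> 0"
  shows "f t = exp (- c * t) * f 0"
proof -
  define w where "w s = exp (c * s) * f s" for s
  have "(w has_vector_derivative 0) (at s within {0..})" if "s \<in> {0..}" for s
  proof -
    have "((\<lambda>s. exp (c * s)) has_real_derivative exp (c * s) * c) (at s within {0..})"
      by (auto intro!: derivative_eq_intros)
    from DERIV_mult[OF this f_deriv] that
    have "(w has_real_derivative exp (c * s) * c * f s + - c * f s * exp (c * s)) (at s within {0..})"
      unfolding w_def by simp
    then show ?thesis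
      by (simp add: has_real_derivative_iff_has_vector_derivative algebra_simps)
  qed
  then have "w t = w 0"
    using has_vector_derivative_zero_constant[of "{0..}" w] \<open>t \<ge> 0\<close> by force
  then show ?thesis
    by (simp add: w_def exp_minus field_simps)
qed

lemma diag3_mult_nth: "(diag3 g1 g2 g3 *v x) $ i = gam g1 g2 g3 i * x $ i"
  using exhaust_3[of i]
  by (auto simp: diag3_def mat3_def matrix_vector_mult_def sum_3 gam_def)

lemma diag3_ode_solution_nth:
  assumes z_deriv: "\<And>s. s \<ge> 0 \<Longrightarrow>
      (z has_vector_derivative - (c *\<^sub>R (diag3 g1 g2 g3 *v z s))) (at s within {0..})"
    and "t \<ge> 0"
  shows "z t $ i = exp (- c * gam g1 g2 g3 i * t) * z 0 $ i"
proof -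
  have "z t $ i = exp (- (c * gam g1 g2 g3 i) * t) * z 0 $ i"
  proof (rule linear_ode_solution_exp[OF _ \<open>t \<ge> 0\<close>])
    fix s :: real assume "s \<ge> 0"
    from bounded_linear.has_vector_derivative[OF bounded_linear_vec_nth z_deriv[OF this]]
    show "((\<lambda>t. z t $ i) has_real_derivative - (c * gam g1 g2 g3 i) * z s $ i) (at s within {0..})"
      by (simp add: has_real_derivative_iff_has_vector_derivative diag3_mult_nth mult.assoc)
  qed
  then show ?thesis by simp
qed

lemma diag3_ode_tendsto_zero:
  assumes z_deriv: "\<And>s. s \<ge> 0 \<Longrightarrow>
      (z has_vector_derivative - (c *\<^sub>R (diag3 g1 g2 g3 *v z s))) (at s within {0..})"
    and "c > 0" "g1 > 0" "g2 > 0" "g3 > 0"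
  shows "(z \<longlongrightarrow> 0) at_top"
proof (rule vec_tendstoI)
  fix i
  have "gam g1 g2 g3 i > 0" using assms by (simp add: gam_def)
  with \<open>c > 0\<close> have "((\<lambda>t. exp (- c * gam g1 g2 g3 i * t) * z 0 $ i) \<longlongrightarrow> 0) at_top"
    by real_asymp
  moreover have "\<forall>\<^sub>F t in at_top. exp (- c * gam g1 g2 g3 i * t) * z 0 $ i = z t $ i"
    using eventually_ge_at_top[of 0]
    by eventually_elim (rule diag3_ode_solution_nth[OF z_deriv, symmetric])
  ultimately show "((\<lambda>t. z t $ i) \<longlongrightarrow> 0 $ i) at_top"
    unfolding zero_index by (rule Lim_transform_eventually)
qed

lemma matrix_inv_eqI:
  fixes A B :: "'a::comm_ring_1^'n^'n"
  assumes "A ** B = mat 1" "B ** A = mat 1"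
  shows "matrix_inv A = B"
proof -
  have "A ** matrix_inv A = mat 1 \<and> matrix_inv A ** A = mat 1"
    unfolding matrix_inv_def by (rule someI[of _ B]) (use assms in simp)
  then have "B ** (A ** matrix_inv A) = B"
    by (simp add: matrix_mul_rid)
  then show ?thesis
    by (simp add: matrix_mul_assoc assms(2) matrix_mul_lid)
qed

lemma matrix_inv_massM:
  fixes m11 m22 m23 m32 m33 :: real
  defines "d \<equiv> m22 * m33 - m23 * m32"
  assumes "m11 \<noteq> 0" "d \<noteq> 0"
  shows "matrix_inv (massM m11 m22 m23 m32 m33) =
      mat3 (1/m11) 0 0  0 (m33/d) (- m23/d)  0 (- m32/d) (m22/d)"
    and "matrix_inv (massM m11 m22 m23 m32 m33) ** massM m11 m22 m23 m32 m33 = mat 1"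
proof -
  let ?M = "massM m11 m22 m23 m32 m33"
  let ?K = "mat3 (1/m11) 0 0  0 (m33/d) (- m23/d)  0 (- m32/d) (m22/d)"
  have right: "?M ** ?K = mat 1" and left: "?K ** ?M = mat 1"
    using assms
    by (simp_all add: vec_eq_iff forall_3 matrix_matrix_mult_def sum_3 mat3_def massM_def mat_def
        diff_divide_distrib[symmetric] add_divide_distrib[symmetric] mult.commute)
  show inv: "matrix_inv ?M = ?K"
    using right left by (rule matrix_inv_eqI)
  show "matrix_inv ?M ** ?M = mat 1"
    unfolding inv by (rule left)
qed

lemma massM_det_pos:
  assumes posdef: "\<And>x::real^3. x \<noteq> 0 \<Longrightarrow> x \<bullet> (massM m11 m22 m23 m32 m33 *v x) > 0"
  shows "m22 * m33 - m23 * m32 > 0"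
proof -
  have quadratic_form: "x \<bullet> (massM m11 m22 m23 m32 m33 *v x)
      = m11 * (x$1)\<^sup>2 + m22 * (x$2)\<^sup>2 + (m23 + m32) * x$2 * x$3 + m33 * (x$3)\<^sup>2" for x :: "real^3"
    by (simp add: massM_def mat3_def inner_vec_def sum_3 matrix_vector_mult_def
        algebra_simps power2_eq_square)
  have "(axis 2 1 :: real^3) \<noteq> 0" by (simp add: axis_eq_0_iff)
  from posdef[OF this] have "m22 > 0" by (simp add: quadratic_form axis_def)
  define x :: "real^3" where "x = vector [0, m23, - m22]"
  have "x $ 3 \<noteq> 0" using \<open>m22 > 0\<close> by (simp add: x_def)
  then have "x \<noteq> 0" by auto
  from posdef[OF this] have "m22 * (m22 * m33 - m23 * m32) > 0"
    by (simp add: quadratic_form x_def algebra_simps power2_eq_square)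
  with \<open>m22 > 0\<close> show ?thesis by (simp add: zero_less_mult_iff)
qed

lemma gainT_mult_matrix_inv:
  assumes "kap M 1 2 = 0" "kap M 1 3 = 0" "kap M 2 1 = 0" "kap M 3 1 = 0"
    and "kap M 1 1 \<noteq> 0" "kap M 2 2 \<noteq> 0" "kap M 3 3 \<noteq> 0"
  shows "gainT M g1 g2 g3 ** matrix_inv M = sigmaK M *\<^sub>R diag3 g1 g2 g3"
proof -
  have "matrix_inv M = (\<chi> i j. kap M i j)"
    by (simp add: kap_def vec_eq_iff)
  then show ?thesis
    using assms
    by (simp add: gainT_def sigmaK_def diag3_def vec_eq_iff forall_3 matrix_matrix_mult_def
        sum_3 mat3_def field_simps)
qed

lemma sigmaK_pos:
  assumes "kap M 2 3 * kap M 3 2 < kap M 2 2 * kap M 3 3" "kap M 2 2 * kap M 3 3 > 0"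
  shows "sigmaK M > 0"
  using assms by (simp add: sigmaK_def)

theorem mainTheorem1:
  fixes m11 m22 m23 m32 m33 g1 g2 g3 :: real
    and h :: hydro
    and \<nu> \<nu>' \<zeta> \<tau> :: "real \<Rightarrow> real^3"
    and \<tau>d :: "real^3"
  defines "M \<equiv> massM m11 m22 m23 m32 m33"
  defines "T \<equiv> gainT M g1 g2 g3"
  defines "\<sigma> \<equiv> sigmaK M"
  defines "\<tau>hat \<equiv> (\<lambda>t. \<zeta> t + T *v \<nu> t)"
  defines "z \<equiv> (\<lambda>t. \<tau>d - \<tau>hat t)"
  assumes pos: "m11 > 0" "m22 > 0" "m23 > 0" "m32 > 0" "m33 > 0"
    and sym: "m23 = m32"
    and posdef: "\<And>x::real^3. x \<noteq> 0 \<Longrightarrow> x \<bullet> (M *v x) > 0"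
    and kcond: "kap M 2 3 * kap M 3 2 < kap M 2 2 * kap M 3 3"
    and gpos: "g1 > 0" "g2 > 0" "g3 > 0"
    and nu_deriv: "\<And>t. t \<ge> 0 \<Longrightarrow> (\<nu> has_vector_derivative \<nu>' t) (at t within {0..})"
    and ship: "\<And>t. t \<ge> 0 \<Longrightarrow>
        M *v \<nu>' t + dampD h (\<nu> t) *v \<nu> t + corC m11 m22 m23 (\<nu> t) *v \<nu> t = \<tau> t + \<tau>d"
    and observer: "\<And>t. t \<ge> 0 \<Longrightarrow>
        (\<zeta> has_vector_derivative
           (- (T *v (matrix_inv M *v (\<tau> t + \<tau>hat t - dampD h (\<nu> t) *v \<nu> t
                                        - corC m11 m22 m23 (\<nu> t) *v \<nu> t)))))
        (at t within {0..})"
  shows "(\<forall>t\<ge>0. (z has_vector_derivative (- (\<sigma> *\<^sub>R (diag3 g1 g2 g3 *v z t)))) (at t within {0..}))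
       \<and> (\<forall>t\<ge>0. \<forall>i. z t $ i = exp (- \<sigma> * gam g1 g2 g3 i * t) * z 0 $ i)
       \<and> (z \<longlongrightarrow> 0) at_top"
proof -
  define d where "d = m22 * m33 - m23 * m32"
  have "d > 0"
    using massM_det_pos posdef unfolding M_def d_def by blast
  with pos have "matrix_inv M = mat3 (1/m11) 0 0  0 (m33/d) (- m23/d)  0 (- m32/d) (m22/d)"
      and left_inverse: "matrix_inv M ** M = mat 1"
    using matrix_inv_massM unfolding M_def d_def by auto
  then have kappa: "kap M 1 1 = 1/m11" "kap M 2 2 = m33/d" "kap M 3 3 = m22/d"
      "kap M 1 2 = 0" "kap M 1 3 = 0" "kap M 2 1 = 0" "kap M 3 1 = 0"
    by (simp_all add: kap_def mat3_def)
  have TK: "T ** matrix_inv M = \<sigma> *\<^sub>R diag3 g1 g2 g3"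
    unfolding T_def \<sigma>_def using pos \<open>d > 0\<close> by (intro gainT_mult_matrix_inv) (simp_all add: kappa)
  have sigma_pos: "\<sigma> > 0"
    unfolding \<sigma>_def using kcond pos \<open>d > 0\<close> by (intro sigmaK_pos) (simp_all add: kappa)
  have z_deriv: "(z has_vector_derivative - (\<sigma> *\<^sub>R (diag3 g1 g2 g3 *v z t))) (at t within {0..})"
    if "t \<ge> 0" for t
    using observer_error_has_vector_derivative[OF left_inverse nu_deriv, of t
        "\<tau> t - dampD h (\<nu> t) *v \<nu> t - corC m11 m22 m23 (\<nu> t) *v \<nu> t" \<tau>d \<zeta> T]
      ship[OF that] observer[OF that] that
    unfolding z_def \<tau>hat_def TK by (simp add: algebra_simps scaleR_matrix_vector_assoc)
  show ?thesis
    using z_deriv diag3_ode_solution_nth[of z \<sigma>] diag3_ode_tendsto_zero[OF z_deriv sigma_pos gpos]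
    by blast
qed

end
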